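(* For every integer $n\ge1$, $$F_{2n-1}=\sum_{(a_1,\dots,a_k)\in C(n)}2^{\#\{i\,:\,a_i=1\}+n-2k},$$ where $k$ is the number of parts of the composition.
   Context: $C(n)$ is the set of all compositions $(a_1,\dots,a_k)$ of $n$ (sequences of positive integers with sum $n$, any number of parts). Fibonacci numbers: $F_0=0$, $F_1=1$, $F_n=F_{n-1}+F_{n-2}$. *)

theory Defs
  imports Complex_Main "HOL-Number_Theory.Fib"
begin

definition compositions :: "nat \<Rightarrow> nat list set" where
  "compositions n = {xs. (\<forall>a\<in>set xs. a > 0) \<and> sum_list xs = n}"

end

theory Submission
  imports Defs
begin

text \<open>The summand is multiplicative over the parts: a part 1 contributes the factor 1 and a part
  a \<ge> 2 the factor 2^(a-2). Every composition of n+1 arises from exactly one composition of n,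
  either by prepending a part 1 or by increasing the first part by one; the latter doubles the
  weight unless the first part was 1. Hence the total weight S(n) and the total weight T(n) of the
  compositions with increased first part satisfy S(n+1) = S(n) + T(n) and T(n+1) = S(n) + 2 T(n),
  which are the recurrences of F(2n-1) and F(2n).\<close>

lemma Nil_in_compositions [simp]: "[] \<in> compositions n \<longleftrightarrow> n = 0"
  by (simp add: compositions_def)

lemma Cons_in_compositions [simp]:
  "a # ys \<in> compositions n \<longleftrightarrow> 0 < a \<and> a \<le> n \<and> ys \<in> compositions (n - a)"
  by (auto simp: compositions_def)

lemma compositions_0 [simp]: "compositions 0 = {[]}"
proof (intro set_eqI iffI)
  fix xs :: "nat list" assume "xs \<in> compositions 0"
  then show "xs \<in> {[]}"
    by (cases xs) auto
qed simp

lemma compositions_Suc_0: "compositions (Suc 0) = {[1]}"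
proof (intro set_eqI iffI)
  fix xs assume "xs \<in> compositions (Suc 0)"
  then show "xs \<in> {[1]}"
    by (cases xs) auto
qed simp

fun bump_head :: "nat list \<Rightarrow> nat list" where
  "bump_head [] = []"
| "bump_head (a # xs) = Suc a # xs"

lemma compositions_Suc:
  assumes "n \<ge> 1"
  shows "compositions (Suc n) = Cons 1 ` compositions n \<union> bump_head ` compositions n"
proof (intro set_eqI iffI)
  fix xs assume xs: "xs \<in> compositions (Suc n)"
  then obtain a ys where xs_eq: "xs = a # ys"
    by (cases xs) auto
  show "xs \<in> Cons 1 ` compositions n \<union> bump_head ` compositions n"
  proof (cases "a = 1")
    case True
    with xs xs_eq have "xs = 1 # ys" "ys \<in> compositions n"
      by auto
    then show ?thesis
      by blast
  next
    case False
    with xs xs_eq have "xs = bump_head ((a - 1) # ys)" "(a - 1) # ys \<in> compositions n"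
      by auto
    then show ?thesis
      by blast
  qed
next
  fix xs assume "xs \<in> Cons 1 ` compositions n \<union> bump_head ` compositions n"
  then obtain ys where "ys \<in> compositions n" "xs = 1 # ys \<or> xs = bump_head ys"
    by blast
  with assms show "xs \<in> compositions (Suc n)"
    by (cases ys) auto
qed

lemma length_le_sum_list:
  "\<forall>a\<in>set xs. a > 0 \<Longrightarrow> length xs \<le> sum_list xs"
  by (induction xs) auto

lemma finite_compositions: "finite (compositions n)"
proof (rule finite_subset)
  show "compositions n \<subseteq> {xs. set xs \<subseteq> {0..n} \<and> length xs \<le> n}"
    unfolding compositions_def using length_le_sum_list member_le_sum_list by fastforce
  show "finite {xs. set xs \<subseteq> {0..n} \<and> length xs \<le> n}"
    by (rule finite_lists_length_le) simp
qed

lemma sum_compositions_Suc: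
  fixes h :: "nat list \<Rightarrow> 'b::comm_monoid_add"
  assumes "n \<ge> 1"
  shows "(\<Sum>xs\<in>compositions (Suc n). h xs)
    = (\<Sum>xs\<in>compositions n. h (1 # xs)) + (\<Sum>xs\<in>compositions n. h (bump_head xs))"
proof -
  let ?C = "compositions n"
  have head_pos: "\<exists>a ys. xs = a # ys \<and> a > 0" if "xs \<in> ?C" for xs
    using that assms by (cases xs) auto
  have "inj_on bump_head ?C"
  proof (rule inj_onI)
    fix xs ys assume "xs \<in> ?C" "ys \<in> ?C" "bump_head xs = bump_head ys"
    then show "xs = ys"
      using head_pos[of xs] head_pos[of ys] by auto
  qed
  moreover have "Cons 1 ` ?C \<inter> bump_head ` ?C = {}"
    using head_pos by fastforce
  ultimately have "(\<Sum>xs\<in>Cons 1 ` ?C \<union> bump_head ` ?C. h xs)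
      = (\<Sum>xs\<in>?C. h (1 # xs)) + (\<Sum>xs\<in>?C. h (bump_head xs))"
    by (simp add: sum.union_disjoint sum.reindex finite_compositions)
  then show ?thesis
    unfolding compositions_Suc[OF assms] .
qed

definition part_weight :: "nat \<Rightarrow> nat" where
  "part_weight a = (if a = 1 then 1 else 2 ^ (a - 2))"

definition weight :: "nat list \<Rightarrow> nat" where
  "weight xs = prod_list (map part_weight xs)"

lemma weight_Cons_one [simp]: "weight (1 # xs) = weight xs"
  by (simp add: weight_def part_weight_def)

lemma weight_Cons_Suc:
  "a \<ge> 1 \<Longrightarrow> weight (Suc a # xs) = (if a = 1 then 1 else 2) * weight (a # xs)"
proof -
  assume "a \<ge> 1"
  then obtain k where "a = Suc k" by (cases a) auto
  then show ?thesis
    by (cases k) (simp_all add: weight_def part_weight_def)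
qed

lemma powi_eq_weight:
  assumes "\<forall>a\<in>set xs. a > 0"
  shows "(2::real) powi (int (length (filter (\<lambda>a. a = 1) xs)) + int (sum_list xs) - 2 * int (length xs))
    = real (weight xs)"
  using assms
proof (induction xs)
  case Nil
  then show ?case by (simp add: weight_def)
next
  case (Cons a xs)
  let ?e = "\<lambda>xs. int (length (filter (\<lambda>a. a = 1) xs)) + int (sum_list xs) - 2 * int (length xs)"
  have exponent: "?e (a # xs) = (int (if a = 1 then 1 else 0) + int a - 2) + ?e xs"
    by (cases "a = 1") simp_all
  have "(2::real) powi ?e (a # xs) = 2 powi (int (if a = 1 then 1 else 0) + int a - 2) * 2 powi ?e xs"
    unfolding exponent by (rule power_int_add) simp
  also have "(2::real) powi (int (if a = 1 then 1 else 0) + int a - 2) = real (part_weight a)"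
    using Cons.prems by (auto simp: part_weight_def power_int_def nat_diff_distrib)
  also have "(2::real) powi ?e xs = real (weight xs)"
    using Cons by simp
  also have "real (part_weight a) * real (weight xs) = real (weight (a # xs))"
    by (simp add: weight_def)
  finally show ?case .
qed

lemma weight_sums_fib:
  "(\<Sum>xs\<in>compositions (Suc m). weight xs) = fib (2 * m + 1)
   \<and> (\<Sum>xs\<in>compositions (Suc m). weight (bump_head xs)) = fib (2 * m + 2)"
proof (induction m)
  case 0
  show ?case by (simp add: compositions_Suc_0 weight_def part_weight_def)
next
  case (Suc m)
  let ?C = "compositions (Suc m)"
  have double_bump: "weight (bump_head (bump_head xs)) = 2 * weight (bump_head xs)"
    if "xs \<in> ?C" for xs
    using that by (cases xs) (auto simp: weight_Cons_Suc)
  have bump_one: "weight (bump_head (1 # xs)) = weight xs" for xs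
    by (simp add: weight_def part_weight_def)
  have split: "(\<Sum>xs\<in>compositions (Suc (Suc m)). h xs)
      = (\<Sum>xs\<in>?C. h (1 # xs)) + (\<Sum>xs\<in>?C. h (bump_head xs))" for h :: "nat list \<Rightarrow> nat"
    by (rule sum_compositions_Suc) simp
  have "(\<Sum>xs\<in>compositions (Suc (Suc m)). weight xs) = fib (2 * m + 1) + fib (2 * m + 2)"
    using Suc.IH unfolding split weight_Cons_one by simp
  moreover have "(\<Sum>xs\<in>compositions (Suc (Suc m)). weight (bump_head xs))
      = fib (2 * m + 1) + 2 * fib (2 * m + 2)"
    using Suc.IH unfolding split bump_one by (simp add: double_bump flip: sum_distrib_left)
  moreover have "fib (2 * Suc m + 1) = fib (2 * m + 1) + fib (2 * m + 2)"
    "fib (2 * Suc m + 2) = fib (2 * m + 1) + 2 * fib (2 * m + 2)"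
    by (simp_all add: numeral_2_eq_2)
  ultimately show ?case by simp
qed

theorem mainTheorem14:
  fixes n :: nat
  assumes "n \<ge> 1"
  shows "real (fib (2 * n - 1)) =
    (\<Sum>xs\<in>compositions n.
       (2::real) powi (int (length (filter (\<lambda>a. a = 1) xs)) + int n - 2 * int (length xs)))"
proof -
  obtain m where n: "n = Suc m"
    using assms by (cases n) auto
  have "(\<Sum>xs\<in>compositions n.
       (2::real) powi (int (length (filter (\<lambda>a. a = 1) xs)) + int n - 2 * int (length xs)))
    = (\<Sum>xs\<in>compositions n. real (weight xs))"
    by (rule sum.cong) (auto simp: compositions_def powi_eq_weight[symmetric])
  also have "\<dots> = real (fib (2 * m + 1))"
    using weight_sums_fib[of m] by (simp add: n flip: of_nat_sum)
  finally show ?thesis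
    by (simp add: n)
qed

end
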